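(* Let $U$ be a subgroup of $G^*$. Then there exists a resolute and $U$-symmetric matching mechanism if and only if $C^U(p)\neq\varnothing$ for every $p\in\mathcal{P}$.
   Context: Fix $n\ge 2$, $W=\{1,\dots,n\}$, $M=\{n+1,\dots,2n\}$, $I=W\cup M$. Permutations compose right-to-left. A preference profile is a function $p$ on $I$ assigning to each $x\in W$ a linear order $p(x)$ on $M$ and to each $y\in M$ a linear order $p(y)$ on $W$; $\mathcal{P}$ is the set of preference profiles. A matching is a permutation $\mu$ of $I$ with $\mu(W)=M$, $\mu(M)=W$, $\mu(\mu(z))=z$; $\mathcal{M}$ is the set of matchings. $G^*=\{\varphi\in\mathrm{Sym}(I):\{\varphi(W),\varphi(M)\}=\{W,M\}\}$. For a linear order $R$ on $X\subseteq I$ and $\varphi\in\mathrm{Sym}(I)$, $\varphi R$ is the relation on $\varphi(X)$ with $(a,b)\in\varphi R$ iff $(\varphi^{-1}(a),\varphi^{-1}(b))\in R$. For $\varphi\in G^*$, $p^\varphi(z)=\varphi\,p(\varphi^{-1}(z))$; $\mu^\varphi=\varphi\mu\varphi^{-1}$; $S^\varphi=\{\mu^\varphi:\mu\in S\}$. A matching mechanism is a correspondence $F$ from $\mathcal{P}$ to $\mathcal{M}$; resolute if $|F(p)|=1$ for all $p$; $U$-symmetric if $F(p^\varphi)=F(p)^\varphi$ for all $p$, $\varphi\in U$. $\mathrm{Stab}_U(p)=\{\varphi\in U:p^\varphi=p\}$ and $C^U(p)=\{\mu\in\mathcal{M}:\mu^\varphi=\mu\text{ for all }\varphi\in\mathrm{Stab}_U(p)\}$.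 *)

theory Defs
  imports "HOL-Combinatorics.Permutations"
begin

definition Wset :: "nat \<Rightarrow> nat set" where "Wset n = {1..n}"
definition Mset :: "nat \<Rightarrow> nat set" where "Mset n = {n+1..2*n}"
definition Iset :: "nat \<Rightarrow> nat set" where "Iset n = Wset n \<union> Mset n"

text \<open>Preference profiles: p z is a linear order (relation) on M for z in W and on W for z in M.
  By convention p z = {} outside I, so that profiles are determined by their values on I.\<close>
definition profiles :: "nat \<Rightarrow> (nat \<Rightarrow> (nat \<times> nat) set) set" where
  "profiles n = {p. (\<forall>x\<in>Wset n. linear_order_on (Mset n) (p x))
                  \<and> (\<forall>y\<in>Mset n. linear_order_on (Wset n) (p y))
                  \<and> (\<forall>z. z \<notin> Iset n \<longrightarrow> p z = {})}"

definition matchings :: "nat \<Rightarrow> (nat \<Rightarrow> nat) set" where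
  "matchings n = {\<mu>. \<mu> permutes Iset n \<and> \<mu> ` Wset n = Mset n \<and> \<mu> ` Mset n = Wset n
                    \<and> (\<forall>z\<in>Iset n. \<mu> (\<mu> z) = z)}"

definition Gstar :: "nat \<Rightarrow> (nat \<Rightarrow> nat) set" where
  "Gstar n = {\<phi>. \<phi> permutes Iset n \<and> {\<phi> ` Wset n, \<phi> ` Mset n} = {Wset n, Mset n}}"

definition rel_act :: "(nat \<Rightarrow> nat) \<Rightarrow> (nat \<times> nat) set \<Rightarrow> (nat \<times> nat) set" where
  "rel_act \<phi> R = {(a, b). (inv \<phi> a, inv \<phi> b) \<in> R}"

definition profile_act :: "(nat \<Rightarrow> nat) \<Rightarrow> (nat \<Rightarrow> (nat \<times> nat) set) \<Rightarrow> (nat \<Rightarrow> (nat \<times> nat) set)" where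
  "profile_act \<phi> p = (\<lambda>z. rel_act \<phi> (p (inv \<phi> z)))"

definition matching_act :: "(nat \<Rightarrow> nat) \<Rightarrow> (nat \<Rightarrow> nat) \<Rightarrow> (nat \<Rightarrow> nat)" where
  "matching_act \<phi> \<mu> = \<phi> \<circ> \<mu> \<circ> inv \<phi>"

definition is_subgroup_of :: "(nat \<Rightarrow> nat) set \<Rightarrow> (nat \<Rightarrow> nat) set \<Rightarrow> bool" where
  "is_subgroup_of U G \<longleftrightarrow> U \<subseteq> G \<and> id \<in> U
     \<and> (\<forall>\<phi>\<in>U. \<forall>\<psi>\<in>U. \<phi> \<circ> \<psi> \<in> U) \<and> (\<forall>\<phi>\<in>U. inv \<phi> \<in> U)"

definition mechanism :: "nat \<Rightarrow> ((nat \<Rightarrow> (nat \<times> nat) set) \<Rightarrow> (nat \<Rightarrow> nat) set) \<Rightarrow> bool" where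
  "mechanism n F \<longleftrightarrow> (\<forall>p\<in>profiles n. F p \<subseteq> matchings n)"

definition resolute :: "nat \<Rightarrow> ((nat \<Rightarrow> (nat \<times> nat) set) \<Rightarrow> (nat \<Rightarrow> nat) set) \<Rightarrow> bool" where
  "resolute n F \<longleftrightarrow> (\<forall>p\<in>profiles n. card (F p) = 1)"

definition symmetric_wrt :: "nat \<Rightarrow> (nat \<Rightarrow> nat) set \<Rightarrow> ((nat \<Rightarrow> (nat \<times> nat) set) \<Rightarrow> (nat \<Rightarrow> nat) set) \<Rightarrow> bool" where
  "symmetric_wrt n U F \<longleftrightarrow>
     (\<forall>p\<in>profiles n. \<forall>\<phi>\<in>U. F (profile_act \<phi> p) = matching_act \<phi> ` F p)"

definition Stab :: "(nat \<Rightarrow> nat) set \<Rightarrow> (nat \<Rightarrow> (nat \<times> nat) set) \<Rightarrow> (nat \<Rightarrow> nat) set" where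
  "Stab U p = {\<phi>\<in>U. profile_act \<phi> p = p}"

definition CU :: "nat \<Rightarrow> (nat \<Rightarrow> nat) set \<Rightarrow> (nat \<Rightarrow> (nat \<times> nat) set) \<Rightarrow> (nat \<Rightarrow> nat) set" where
  "CU n U p = {\<mu>\<in>matchings n. \<forall>\<phi>\<in>Stab U p. matching_act \<phi> \<mu> = \<mu>}"

end

theory Submission
  imports Defs
begin

(* If F is resolute with F p = {mu} and phi stabilises p, symmetry gives
   {mu} = F (phi p) = {phi mu phi^-1}, so mu lies in C^U(p).
   Conversely, pick a representative r of every U-orbit of profiles and some mu_r in C^U(r),
   and put F (psi r) = {psi mu_r psi^-1}. This does not depend on psi: two elements of U
   carrying r to the same profile differ by an element of Stab_U(r), which fixes mu_r.
   Symmetry holds because phi (psi r) = (phi psi) r. *)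

lemma rel_act_comp: "bij f \<Longrightarrow> bij g \<Longrightarrow> rel_act (f \<circ> g) R = rel_act f (rel_act g R)"
  by (auto simp: rel_act_def o_inv_distrib)

lemma profile_act_comp:
  "bij f \<Longrightarrow> bij g \<Longrightarrow> profile_act (f \<circ> g) p = profile_act f (profile_act g p)"
  by (auto simp: profile_act_def rel_act_comp o_inv_distrib)

lemma profile_act_id: "profile_act id p = p"
  by (simp add: profile_act_def rel_act_def)

lemma profile_act_inv_cancel: "bij f \<Longrightarrow> profile_act (inv f) (profile_act f p) = p"
  by (simp add: profile_act_comp[symmetric] bij_imp_bij_inv bij_is_inj profile_act_id)

lemma profile_act_apply: "bij f \<Longrightarrow> profile_act f p (f x) = rel_act f (p x)"
  by (simp add: profile_act_def bij_is_inj)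

lemma matching_act_comp:
  "bij f \<Longrightarrow> bij g \<Longrightarrow> matching_act (f \<circ> g) m = matching_act f (matching_act g m)"
  by (simp add: matching_act_def o_inv_distrib o_assoc)

lemma matching_act_image: "bij f \<Longrightarrow> matching_act f m ` (f ` A) = f ` m ` A"
  by (simp add: matching_act_def image_comp bij_is_inj)

lemma linear_order_on_rel_act:
  assumes "bij f" and "linear_order_on A R"
  shows "linear_order_on (f ` A) (rel_act f R)"
proof -
  have image_eq: "f ` A = inv f -` A"
    using assms(1) by (simp add: bij_vimage_eq_inv_image bij_imp_bij_inv inv_inv_eq)
  have rel_eq: "rel_act f R = inv_image R (inv f)"
    by (simp add: rel_act_def inv_image_def)
  have inj: "inj (inv f)"
    using assms(1) by (simp add: bij_imp_bij_inv bij_is_inj)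
  have R: "R \<subseteq> A \<times> A" "refl_on A R" "trans R" "antisym R" "total_on A R"
    using assms(2) by (auto simp: linear_order_on_def partial_order_on_def preorder_on_def)
  have "inv_image R (inv f) \<subseteq> inv f -` A \<times> inv f -` A"
    and "refl_on (inv f -` A) (inv_image R (inv f))"
    and "total_on (inv f -` A) (inv_image R (inv f))"
    using R inj by (auto simp: refl_on_def total_on_def inj_eq)
  moreover have "trans (inv_image R (inv f))"
    using R by (simp add: trans_inv_image)
  moreover have "antisym (inv_image R (inv f))"
    using R inj unfolding antisym_def by (metis in_inv_image injD)
  ultimately show ?thesis
    unfolding image_eq rel_eq linear_order_on_def partial_order_on_def preorder_on_def
    by blast
qed

lemma Gstar_cases:
  assumes "\<phi> \<in> Gstar n"
  obtains "\<phi> ` Wset n = Wset n" "\<phi> ` Mset n = Mset n"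
        | "\<phi> ` Wset n = Mset n" "\<phi> ` Mset n = Wset n"
  using assms unfolding Gstar_def by (auto simp: doubleton_eq_iff)

lemma Gstar_permutes: "\<phi> \<in> Gstar n \<Longrightarrow> \<phi> permutes Iset n"
  by (simp add: Gstar_def)

lemma profile_act_in_profiles:
  assumes "\<phi> \<in> Gstar n" and "p \<in> profiles n"
  shows "profile_act \<phi> p \<in> profiles n"
proof -
  have perm: "\<phi> permutes Iset n" and bij: "bij \<phi>"
    using Gstar_permutes[OF assms(1)] by (simp_all add: permutes_bij)
  have side: "linear_order_on (\<phi> ` B) (profile_act \<phi> p z)"
    if "z \<in> \<phi> ` A" "\<forall>x\<in>A. linear_order_on B (p x)" for A B z
    using that linear_order_on_rel_act[OF bij] by (auto simp: profile_act_apply[OF bij])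
  have W: "\<forall>x\<in>Wset n. linear_order_on (Mset n) (p x)"
    and M: "\<forall>y\<in>Mset n. linear_order_on (Wset n) (p y)"
    and outside: "\<forall>z. z \<notin> Iset n \<longrightarrow> p z = {}"
    using assms(2) by (auto simp: profiles_def)
  have "profile_act \<phi> p z = {}" if "z \<notin> Iset n" for z
    using that outside permutes_not_in[OF permutes_inv[OF perm]]
    by (simp add: profile_act_def rel_act_def)
  moreover from assms(1) have
    "(\<forall>x\<in>Wset n. linear_order_on (Mset n) (profile_act \<phi> p x))
     \<and> (\<forall>y\<in>Mset n. linear_order_on (Wset n) (profile_act \<phi> p y))"
    by (cases rule: Gstar_cases) (metis side W M)+
  ultimately show ?thesis
    by (simp add: profiles_def)
qed

lemma matching_act_in_matchings:
  assumes "\<phi> \<in> Gstar n" and "\<mu> \<in> matchings n"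
  shows "matching_act \<phi> \<mu> \<in> matchings n"
proof -
  have perm: "\<phi> permutes Iset n" and bij: "bij \<phi>"
    using Gstar_permutes[OF assms(1)] by (simp_all add: permutes_bij)
  have \<mu>: "\<mu> permutes Iset n" "\<mu> ` Wset n = Mset n" "\<mu> ` Mset n = Wset n"
    "\<forall>z\<in>Iset n. \<mu> (\<mu> z) = z"
    using assms(2) by (auto simp: matchings_def)
  have "matching_act \<phi> \<mu> permutes Iset n"
    unfolding matching_act_def by (intro permutes_compose permutes_inv perm \<mu>(1))
  moreover from assms(1)
  have "matching_act \<phi> \<mu> ` Wset n = Mset n \<and> matching_act \<phi> \<mu> ` Mset n = Wset n"
    by (cases rule: Gstar_cases) (metis matching_act_image[OF bij] \<mu>(2,3))+
  moreover have "matching_act \<phi> \<mu> (matching_act \<phi> \<mu> z) = z" if "z \<in> Iset n" for z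
    using that \<mu>(4) permutes_in_image[OF permutes_inv[OF perm]]
    by (simp add: matching_act_def inv_f_f[OF bij_is_inj[OF bij]]
        surj_f_inv_f[OF bij_is_surj[OF bij]])
  ultimately show ?thesis
    by (simp add: matchings_def)
qed

lemma resolute_symmetric_mechanism_in_CU:
  assumes "mechanism n F" "resolute n F" "symmetric_wrt n U F" and p: "p \<in> profiles n"
  shows "F p \<subseteq> CU n U p"
proof -
  obtain \<mu> where F_p: "F p = {\<mu>}"
    using assms(2) p by (auto simp: resolute_def card_1_singleton_iff)
  have "matching_act \<phi> \<mu> = \<mu>" if "\<phi> \<in> Stab U p" for \<phi>
  proof -
    from that have "\<phi> \<in> U" "profile_act \<phi> p = p"
      by (simp_all add: Stab_def)
    then have "F p = matching_act \<phi> ` F p"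
      using assms(3) p unfolding symmetric_wrt_def by metis
    then show ?thesis
      using F_p by simp
  qed
  moreover have "\<mu> \<in> matchings n"
    using assms(1) p F_p by (auto simp: mechanism_def)
  ultimately show ?thesis
    using F_p by (simp add: CU_def)
qed

locale Gstar_subgroup =
  fixes n :: nat and U :: "(nat \<Rightarrow> nat) set"
  assumes subgroup: "is_subgroup_of U (Gstar n)"
begin

lemma subset_Gstar: "U \<subseteq> Gstar n"
  and id_mem: "id \<in> U"
  and comp_mem: "\<phi> \<in> U \<Longrightarrow> \<psi> \<in> U \<Longrightarrow> \<phi> \<circ> \<psi> \<in> U"
  and inv_mem: "\<phi> \<in> U \<Longrightarrow> inv \<phi> \<in> U"
  using subgroup by (auto simp: is_subgroup_of_def)

lemma bij_mem: "\<phi> \<in> U \<Longrightarrow> bij \<phi>"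
  using subset_Gstar Gstar_permutes permutes_bij by blast

lemma comp_right_image: "\<phi> \<in> U \<Longrightarrow> (\<lambda>\<psi>. \<psi> \<circ> \<phi>) ` U = U"
proof (intro equalityI subsetI)
  fix \<psi> assume "\<phi> \<in> U" "\<psi> \<in> U"
  moreover have "\<psi> = (\<psi> \<circ> inv \<phi>) \<circ> \<phi>"
    using bij_mem[OF \<open>\<phi> \<in> U\<close>] by (simp add: o_assoc[symmetric] bij_is_inj)
  ultimately show "\<psi> \<in> (\<lambda>\<psi>. \<psi> \<circ> \<phi>) ` U"
    using comp_mem inv_mem by blast
qed (auto intro: comp_mem)

definition orbit :: "(nat \<Rightarrow> (nat \<times> nat) set) \<Rightarrow> (nat \<Rightarrow> (nat \<times> nat) set) set" where
  "orbit p = (\<lambda>\<phi>. profile_act \<phi> p) ` U"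

definition orbit_rep :: "(nat \<Rightarrow> (nat \<times> nat) set) \<Rightarrow> nat \<Rightarrow> (nat \<times> nat) set" where
  "orbit_rep p = (SOME q. q \<in> orbit p)"

lemma orbit_profile_act: "\<phi> \<in> U \<Longrightarrow> orbit (profile_act \<phi> p) = orbit p"
proof -
  assume "\<phi> \<in> U"
  then have "orbit (profile_act \<phi> p) = (\<lambda>\<psi>. profile_act (\<psi> \<circ> \<phi>) p) ` U"
    by (auto simp: orbit_def profile_act_comp bij_mem)
  also have "\<dots> = (\<lambda>\<chi>. profile_act \<chi> p) ` (\<lambda>\<psi>. \<psi> \<circ> \<phi>) ` U"
    by (simp add: image_comp o_def)
  finally show ?thesis
    using \<open>\<phi> \<in> U\<close> by (simp add: comp_right_image orbit_def)
qed

lemma orbit_rep_profile_act: "\<phi> \<in> U \<Longrightarrow> orbit_rep (profile_act \<phi> p) = orbit_rep p"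
  by (simp add: orbit_rep_def orbit_profile_act)

lemma orbit_rep_in_orbit: "orbit_rep p \<in> orbit p"
proof -
  have "p \<in> orbit p"
    using id_mem profile_act_id by (metis orbit_def image_eqI)
  then show ?thesis
    by (metis orbit_rep_def someI)
qed

lemma transporter_from_orbit_rep:
  obtains \<psi> where "\<psi> \<in> U" "profile_act \<psi> (orbit_rep p) = p"
proof -
  obtain \<phi> where "\<phi> \<in> U" "orbit_rep p = profile_act \<phi> p"
    using orbit_rep_in_orbit by (auto simp: orbit_def)
  then show thesis
    using that[of "inv \<phi>"] by (simp add: inv_mem profile_act_inv_cancel bij_mem)
qed

lemma orbit_rep_in_profiles: "p \<in> profiles n \<Longrightarrow> orbit_rep p \<in> profiles n"
  using orbit_rep_in_orbit[of p] subset_Gstar profile_act_in_profiles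
  by (auto simp: orbit_def)

lemma matching_act_transporters_eq:
  assumes "\<mu> \<in> CU n U q" "\<psi> \<in> U" "\<psi>' \<in> U"
    and "profile_act \<psi> q = profile_act \<psi>' q"
  shows "matching_act \<psi>' \<mu> = matching_act \<psi> \<mu>"
proof -
  define \<sigma> where "\<sigma> = inv \<psi> \<circ> \<psi>'"
  have "\<sigma> \<in> U"
    using assms(2,3) by (simp add: \<sigma>_def comp_mem inv_mem)
  have "profile_act \<sigma> q = profile_act (inv \<psi>) (profile_act \<psi>' q)"
    using assms(2,3) by (simp add: \<sigma>_def profile_act_comp bij_mem bij_imp_bij_inv)
  also have "\<dots> = q"
    using assms(2) assms(4)[symmetric] by (simp add: profile_act_inv_cancel bij_mem)
  finally have "matching_act \<sigma> \<mu> = \<mu>"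
    using assms(1) \<open>\<sigma> \<in> U\<close> by (simp add: CU_def Stab_def)
  moreover have "\<psi>' = \<psi> \<circ> \<sigma>"
    using bij_mem[OF assms(2)] by (simp add: \<sigma>_def o_assoc surj_iff[THEN iffD1] bij_is_surj)
  ultimately show ?thesis
    using assms(2) \<open>\<sigma> \<in> U\<close> by (simp add: matching_act_comp bij_mem)
qed

definition fixed_matching :: "(nat \<Rightarrow> (nat \<times> nat) set) \<Rightarrow> nat \<Rightarrow> nat" where
  "fixed_matching q = (SOME \<mu>. \<mu> \<in> CU n U q)"

definition orbit_mechanism :: "(nat \<Rightarrow> (nat \<times> nat) set) \<Rightarrow> (nat \<Rightarrow> nat) set" where
  "orbit_mechanism p =
     (\<lambda>\<psi>. matching_act \<psi> (fixed_matching (orbit_rep p)))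
       ` {\<psi> \<in> U. profile_act \<psi> (orbit_rep p) = p}"

context
  assumes CU_nonempty: "\<forall>p\<in>profiles n. CU n U p \<noteq> {}"
begin

lemma fixed_matching_in_CU: "q \<in> profiles n \<Longrightarrow> fixed_matching q \<in> CU n U q"
  using CU_nonempty by (simp add: fixed_matching_def some_in_eq)

lemma orbit_mechanism_eq:
  assumes "p \<in> profiles n" "\<psi> \<in> U" "profile_act \<psi> (orbit_rep p) = p"
  shows "orbit_mechanism p = {matching_act \<psi> (fixed_matching (orbit_rep p))}"
  using assms fixed_matching_in_CU[OF orbit_rep_in_profiles[OF assms(1)]]
  by (auto simp: orbit_mechanism_def intro: matching_act_transporters_eq)

lemma mechanism_orbit_mechanism: "mechanism n orbit_mechanism"
  unfolding mechanism_def
proof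
  fix p assume p: "p \<in> profiles n"
  obtain \<psi> where \<psi>: "\<psi> \<in> U" "profile_act \<psi> (orbit_rep p) = p"
    by (rule transporter_from_orbit_rep)
  have "fixed_matching (orbit_rep p) \<in> matchings n"
    using fixed_matching_in_CU[OF orbit_rep_in_profiles[OF p]] by (simp add: CU_def)
  then have "matching_act \<psi> (fixed_matching (orbit_rep p)) \<in> matchings n"
    using \<psi>(1) subset_Gstar by (blast intro: matching_act_in_matchings)
  then show "orbit_mechanism p \<subseteq> matchings n"
    by (simp add: orbit_mechanism_eq[OF p \<psi>])
qed

lemma resolute_orbit_mechanism: "resolute n orbit_mechanism"
  unfolding resolute_def
proof
  fix p assume p: "p \<in> profiles n"
  obtain \<psi> where "\<psi> \<in> U" "profile_act \<psi> (orbit_rep p) = p"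
    by (rule transporter_from_orbit_rep)
  then show "card (orbit_mechanism p) = 1"
    by (simp add: orbit_mechanism_eq[OF p])
qed

lemma symmetric_orbit_mechanism: "symmetric_wrt n U orbit_mechanism"
  unfolding symmetric_wrt_def
proof (intro ballI)
  fix p \<phi> assume p: "p \<in> profiles n" and \<phi>: "\<phi> \<in> U"
  obtain \<psi> where \<psi>: "\<psi> \<in> U" "profile_act \<psi> (orbit_rep p) = p"
    by (rule transporter_from_orbit_rep)
  have \<phi>p: "profile_act \<phi> p \<in> profiles n"
    using \<phi> p subset_Gstar by (blast intro: profile_act_in_profiles)
  have rep: "orbit_rep (profile_act \<phi> p) = orbit_rep p"
    using \<phi> by (rule orbit_rep_profile_act)
  have "profile_act (\<phi> \<circ> \<psi>) (orbit_rep (profile_act \<phi> p)) = profile_act \<phi> p"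
    using \<phi> \<psi> by (simp add: rep profile_act_comp bij_mem)
  then have "orbit_mechanism (profile_act \<phi> p)
      = {matching_act (\<phi> \<circ> \<psi>) (fixed_matching (orbit_rep p))}"
    using orbit_mechanism_eq[OF \<phi>p comp_mem[OF \<phi> \<psi>(1)]] by (simp add: rep)
  then show "orbit_mechanism (profile_act \<phi> p) = matching_act \<phi> ` orbit_mechanism p"
    using \<phi> \<psi> by (simp add: orbit_mechanism_eq[OF p \<psi>] matching_act_comp bij_mem)
qed

end

end

theorem corollary1:
  fixes n :: nat and U :: "(nat \<Rightarrow> nat) set"
  assumes "n \<ge> 2"
    and "is_subgroup_of U (Gstar n)"
  shows "(\<exists>F. mechanism n F \<and> resolute n F \<and> symmetric_wrt n U F)
           \<longleftrightarrow> (\<forall>p\<in>profiles n. CU n U p \<noteq> {})"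
proof
  assume "\<exists>F. mechanism n F \<and> resolute n F \<and> symmetric_wrt n U F"
  then obtain F where F: "mechanism n F" "resolute n F" "symmetric_wrt n U F"
    by blast
  show "\<forall>p\<in>profiles n. CU n U p \<noteq> {}"
  proof
    fix p assume p: "p \<in> profiles n"
    then have "F p \<noteq> {}"
      using F(2) by (auto simp: resolute_def)
    then show "CU n U p \<noteq> {}"
      using resolute_symmetric_mechanism_in_CU[OF F p] by blast
  qed
next
  assume CU_nonempty: "\<forall>p\<in>profiles n. CU n U p \<noteq> {}"
  interpret Gstar_subgroup n U
    using assms(2) by unfold_locales
  show "\<exists>F. mechanism n F \<and> resolute n F \<and> symmetric_wrt n U F"
    using mechanism_orbit_mechanism[OF CU_nonempty] resolute_orbit_mechanism[OF CU_nonempty]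
      symmetric_orbit_mechanism[OF CU_nonempty]
    by blast
qed

end
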